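(* Let $(A,\Delta)=\mathrm{QMap}_\phi(\mathrm{Qs}(M_2))$ with generators $\alpha,\beta,\gamma$ as described below, and set $X=\alpha+\alpha^*$, $Y=\beta+\gamma$. Then $X=X^*$, $Y=Y^*$, $XY+YX=0$, $X^2+Y^2=\mathbb{1}_A$, $\Delta(X)=\mathbb{1}_A\otimes X+X\otimes Y$ and $\Delta(Y)=Y\otimes Y$.
   Context: $A$ is the universal unital $\mathrm{C}^*$-algebra generated by $\alpha,\beta,\gamma$ subject to $\beta=\beta^*$, $\gamma=\gamma^*$, $\alpha^*\alpha+\gamma^2+\alpha\alpha^*+\beta^2=\mathbb{1}$, $\alpha^*\beta+\gamma\alpha^*+\alpha\gamma+\beta\alpha=0$, $\alpha^2+\beta\gamma=0$, $\alpha\beta+\beta\alpha^*=0$, $\gamma\alpha+\alpha^*\gamma=0$, and $\Delta:A\to A\otimes A$ (minimal tensor product) is the unital $*$-homomorphism given by $\Delta(\alpha)=\mathbb{1}\otimes\alpha+(\alpha^*\alpha+\gamma^2)\otimes(\alpha^*-\alpha)+\alpha\otimes\beta+\alpha^*\otimes\gamma$, $\Delta(\beta)=(\alpha\gamma+\beta\alpha)\otimes(\alpha-\alpha^* )+\beta\otimes\beta+\gamma\otimes\gamma$, $\Delta(\gamma)=(\beta\alpha+\alpha\gamma)\otimes(\alpha^*-\alpha)+\gamma\otimes\beta+\beta\otimes\gamma$. (This $(A,\Delta)$ is the quantum commutant of the automorphism $\phi(m)=wmw$, $w=\begin{bmatrix}0&1\\1&0\end{bmatrix}$, of $M_2$.)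 *)

theory Defs
  imports Main
begin

text \<open>A is modelled by a unital ring carrying an
involution sA (the *-operation); the minimal tensor product A (x) A is modelled by
a unital ring B with involution sB together with the elementary tensor map
tens a b = a (x) b, which is biadditive, multiplicative, unital and *-compatible.\<close>

definition involution :: "('a::ring_1 \<Rightarrow> 'a) \<Rightarrow> bool" where
  "involution s \<longleftrightarrow>
     (\<forall>x. s (s x) = x) \<and> (\<forall>x y. s (x + y) = s x + s y) \<and>
     (\<forall>x y. s (x * y) = s y * s x) \<and> s 1 = 1"

definition elementary_tensor ::
  "('a::ring_1 \<Rightarrow> 'a) \<Rightarrow> ('b::ring_1 \<Rightarrow> 'b) \<Rightarrow> ('a \<Rightarrow> 'a \<Rightarrow> 'b) \<Rightarrow> bool" where
  "elementary_tensor sA sB tens \<longleftrightarrow>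
     (\<forall>a b c. tens (a + b) c = tens a c + tens b c) \<and>
     (\<forall>a b c. tens a (b + c) = tens a b + tens a c) \<and>
     (\<forall>a b c d. tens a b * tens c d = tens (a * c) (b * d)) \<and>
     tens 1 1 = 1 \<and>
     (\<forall>a b. sB (tens a b) = tens (sA a) (sA b))"

definition unital_star_hom ::
  "('a::ring_1 \<Rightarrow> 'a) \<Rightarrow> ('b::ring_1 \<Rightarrow> 'b) \<Rightarrow> ('a \<Rightarrow> 'b) \<Rightarrow> bool" where
  "unital_star_hom sA sB D \<longleftrightarrow>
     (\<forall>x y. D (x + y) = D x + D y) \<and> (\<forall>x y. D (x * y) = D x * D y) \<and>
     D 1 = 1 \<and> (\<forall>x. D (sA x) = sB (D x))"

definition qmap_relations ::
  "('a::ring_1 \<Rightarrow> 'a) \<Rightarrow> 'a \<Rightarrow> 'a \<Rightarrow> 'a \<Rightarrow> bool" where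
  "qmap_relations s \<alpha> \<beta> \<gamma> \<longleftrightarrow>
     s \<beta> = \<beta> \<and> s \<gamma> = \<gamma> \<and>
     s \<alpha> * \<alpha> + \<gamma>^2 + \<alpha> * s \<alpha> + \<beta>^2 = 1 \<and>
     s \<alpha> * \<beta> + \<gamma> * s \<alpha> + \<alpha> * \<gamma> + \<beta> * \<alpha> = 0 \<and>
     \<alpha>^2 + \<beta> * \<gamma> = 0 \<and>
     \<alpha> * \<beta> + \<beta> * s \<alpha> = 0 \<and>
     \<gamma> * \<alpha> + s \<alpha> * \<gamma> = 0"

end

theory Submission
  imports Defs
begin

(* Then the four statements about X and Y are proved separately:
   * X* = X and Y* = Y because beta, gamma are self-adjoint;
   * XY + YX = 0 and X^2 + Y^2 = 1 are sums of the defining relations (the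
     second one also uses the adjoint of alpha^2 + beta gamma = 0);
   * Delta(X) = Delta(alpha) + Delta(alpha)* and Delta(Y) = Delta(beta) + Delta(gamma):
     in both sums the "correction" terms P (x) (alpha* - alpha) cancel against
     their mirror images, and what remains regroups by biadditivity. *)

lemma involution_zero:
  assumes "involution s" shows "s 0 = 0"
proof -
  have "s 0 + s 0 = s 0" using assms unfolding involution_def by (metis add_0)
  then show ?thesis by simp
qed

lemma involution_diff:
  assumes "involution s" shows "s (x - y) = s x - s y"
proof -
  have "s (x - y) + s y = s x"
    using assms unfolding involution_def by (metis diff_add_cancel)
  then show ?thesis by (simp add: eq_diff_eq)
qed

lemma involution_sum_self_adjoint:
  assumes "involution s" shows "s (x + s x) = x + s x"
  using assms unfolding involution_def by (simp add: add.commute)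

lemma involution_square:
  assumes "involution s" shows "s (x ^ 2) = (s x) ^ 2"
  using assms unfolding involution_def by (simp add: power2_eq_square)

text \<open>Additivity of the elementary tensor in the second slot: mirrored differences
  cancel.  This is what removes the correction terms from the coproducts.\<close>

lemma tensor_mirror_cancel:
  assumes "elementary_tensor sA sB tens"
  shows "tens a (b - c) + tens a (c - b) = 0"
proof -
  have right_add: "tens a (u + v) = tens a u + tens a v" for u v
    using assms unfolding elementary_tensor_def by blast
  have zero: "tens a 0 = 0"
    using right_add[of 0 0] by simp
  have "tens a (b - c) + tens a (c - b) = tens a ((b - c) + (c - b))"
    by (simp only: right_add)
  then show ?thesis
    by (simp add: zero)
qed

lemma qmap_anticommute:
  fixes \<alpha> \<beta> \<gamma> :: "'a::ring_1"
  assumes "qmap_relations s \<alpha> \<beta> \<gamma>"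
  shows "(\<alpha> + s \<alpha>) * (\<beta> + \<gamma>) + (\<beta> + \<gamma>) * (\<alpha> + s \<alpha>) = 0"
proof -
  text \<open>Expanding, the left side is the sum of the relations involving one
    alpha and one of beta, gamma.\<close>
  have "(\<alpha> + s \<alpha>) * (\<beta> + \<gamma>) + (\<beta> + \<gamma>) * (\<alpha> + s \<alpha>) =
      (s \<alpha> * \<beta> + \<gamma> * s \<alpha> + \<alpha> * \<gamma> + \<beta> * \<alpha>) + (\<alpha> * \<beta> + \<beta> * s \<alpha>)
      + (\<gamma> * \<alpha> + s \<alpha> * \<gamma>)"
    by (simp add: algebra_simps)
  then show ?thesis
    using assms unfolding qmap_relations_def by simp
qed

lemma qmap_square_sum:
  fixes \<alpha> \<beta> \<gamma> :: "'a::ring_1"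
  assumes inv: "involution s" and rel: "qmap_relations s \<alpha> \<beta> \<gamma>"
  shows "(\<alpha> + s \<alpha>) ^ 2 + (\<beta> + \<gamma>) ^ 2 = 1"
proof -
  have sa: "s \<beta> = \<beta>" "s \<gamma> = \<gamma>" and alpha_sq: "\<alpha> ^ 2 + \<beta> * \<gamma> = 0"
    using rel unfolding qmap_relations_def by auto
  have alpha_star_sq: "(s \<alpha>) ^ 2 + \<gamma> * \<beta> = 0"
  proof -
    have "s (\<alpha> ^ 2 + \<beta> * \<gamma>) = 0"
      using alpha_sq involution_zero[OF inv] by simp
    then show ?thesis
      using inv sa unfolding involution_def by (simp add: power2_eq_square)
  qed
  have "(\<alpha> + s \<alpha>) ^ 2 + (\<beta> + \<gamma>) ^ 2 = (s \<alpha> * \<alpha> + \<gamma> ^ 2 + \<alpha> * s \<alpha> + \<beta> ^ 2)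
      + (\<alpha> ^ 2 + \<beta> * \<gamma>) + ((s \<alpha>) ^ 2 + \<gamma> * \<beta>)"
    by (simp add: power2_eq_square algebra_simps)
  then show ?thesis
    using rel alpha_sq alpha_star_sq unfolding qmap_relations_def by simp
qed

text \<open>Delta(X) = Delta(alpha) + Delta(alpha)*; the correction term carried by the
  self-adjoint element P = alpha* alpha + gamma^2 cancels against its adjoint.\<close>

lemma coproduct_X:
  fixes sA :: "'a::ring_1 \<Rightarrow> 'a" and sB :: "'b::ring_1 \<Rightarrow> 'b"
  assumes invA: "involution sA" and invB: "involution sB"
    and T: "elementary_tensor sA sB tens" and D: "unital_star_hom sA sB \<Delta>"
    and rel: "qmap_relations sA \<alpha> \<beta> \<gamma>"
    and D_alpha: "\<Delta> \<alpha> = tens 1 \<alpha> + tens (sA \<alpha> * \<alpha> + \<gamma>^2) (sA \<alpha> - \<alpha>)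
              + tens \<alpha> \<beta> + tens (sA \<alpha>) \<gamma>"
  shows "\<Delta> (\<alpha> + sA \<alpha>) = tens 1 (\<alpha> + sA \<alpha>) + tens (\<alpha> + sA \<alpha>) (\<beta> + \<gamma>)"
proof -
  define P where "P = sA \<alpha> * \<alpha> + \<gamma>^2"
  have sA_ax: "sA (sA x) = x" "sA (x + y) = sA x + sA y" "sA (x * y) = sA y * sA x"
    "sA 1 = 1" for x y
    using invA unfolding involution_def by auto
  have sB_add: "sB (x + y) = sB x + sB y" for x y
    using invB unfolding involution_def by blast
  have tens_add: "tens (a + b) c = tens a c + tens b c" "tens a (b + c) = tens a b + tens a c"
    and tens_star: "sB (tens a b) = tens (sA a) (sA b)" for a b c
    using T unfolding elementary_tensor_def by auto
  have self_adj: "sA \<beta> = \<beta>" "sA \<gamma> = \<gamma>"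
    using rel unfolding qmap_relations_def by auto
  have P_self_adj: "sA P = P"
    unfolding P_def using involution_square[OF invA] by (simp add: sA_ax self_adj)
  have D_alpha_star: "\<Delta> (sA \<alpha>) = tens 1 (sA \<alpha>) + tens P (\<alpha> - sA \<alpha>)
              + tens (sA \<alpha>) \<beta> + tens \<alpha> \<gamma>"
  proof -
    have "\<Delta> (sA \<alpha>) = sB (\<Delta> \<alpha>)"
      using D unfolding unital_star_hom_def by blast
    then show ?thesis
      using D_alpha unfolding P_def[symmetric]
      by (simp add: sB_add tens_star P_self_adj involution_diff[OF invA] sA_ax self_adj)
  qed
  have "\<Delta> (\<alpha> + sA \<alpha>) = \<Delta> \<alpha> + \<Delta> (sA \<alpha>)"
    using D unfolding unital_star_hom_def by blast
  also have "\<dots> = (tens 1 \<alpha> + tens 1 (sA \<alpha>)) + (tens \<alpha> \<beta> + tens (sA \<alpha>) \<beta>)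
      + (tens \<alpha> \<gamma> + tens (sA \<alpha>) \<gamma>) + (tens P (sA \<alpha> - \<alpha>) + tens P (\<alpha> - sA \<alpha>))"
    unfolding D_alpha D_alpha_star P_def[symmetric] by (simp only: ac_simps)
  also have "\<dots> = tens 1 (\<alpha> + sA \<alpha>) + tens (\<alpha> + sA \<alpha>) (\<beta> + \<gamma>)"
    by (simp add: tensor_mirror_cancel[OF T] tens_add ac_simps)
  finally show ?thesis .
qed

text \<open>Delta(Y) = Delta(beta) + Delta(gamma); the correction terms carried by
  Q = alpha gamma + beta alpha appear with opposite signs and cancel.\<close>

lemma coproduct_Y:
  assumes T: "elementary_tensor sA sB tens" and D: "unital_star_hom sA sB \<Delta>"
    and D_beta: "\<Delta> \<beta> = tens (\<alpha> * \<gamma> + \<beta> * \<alpha>) (\<alpha> - sA \<alpha>) + tens \<beta> \<beta> + tens \<gamma> \<gamma>"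
    and D_gamma: "\<Delta> \<gamma> = tens (\<beta> * \<alpha> + \<alpha> * \<gamma>) (sA \<alpha> - \<alpha>) + tens \<gamma> \<beta> + tens \<beta> \<gamma>"
  shows "\<Delta> (\<beta> + \<gamma>) = tens (\<beta> + \<gamma>) (\<beta> + \<gamma>)"
proof -
  define Q where "Q = \<alpha> * \<gamma> + \<beta> * \<alpha>"
  have tens_add: "tens (a + b) c = tens a c + tens b c" "tens a (b + c) = tens a b + tens a c"
    for a b c
    using T unfolding elementary_tensor_def by auto
  have "\<Delta> (\<beta> + \<gamma>) = \<Delta> \<beta> + \<Delta> \<gamma>"
    using D unfolding unital_star_hom_def by blast
  also have "\<dots> = (tens \<beta> \<beta> + tens \<beta> \<gamma>) + (tens \<gamma> \<beta> + tens \<gamma> \<gamma>)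
      + (tens Q (\<alpha> - sA \<alpha>) + tens Q (sA \<alpha> - \<alpha>))"
    unfolding D_beta D_gamma Q_def by (simp only: ac_simps)
  also have "\<dots> = tens (\<beta> + \<gamma>) (\<beta> + \<gamma>)"
    by (simp add: tensor_mirror_cancel[OF T] tens_add ac_simps)
  finally show ?thesis .
qed

theorem mainTheorem9:
  fixes sA :: "'a::ring_1 \<Rightarrow> 'a" and sB :: "'b::ring_1 \<Rightarrow> 'b"
    and tens :: "'a \<Rightarrow> 'a \<Rightarrow> 'b" and \<Delta> :: "'a \<Rightarrow> 'b"
    and \<alpha> \<beta> \<gamma> :: 'a
  assumes "involution sA" and "involution sB"
    and "elementary_tensor sA sB tens"
    and "unital_star_hom sA sB \<Delta>"
    and "qmap_relations sA \<alpha> \<beta> \<gamma>"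
    and "\<Delta> \<alpha> = tens 1 \<alpha> + tens (sA \<alpha> * \<alpha> + \<gamma>^2) (sA \<alpha> - \<alpha>)
              + tens \<alpha> \<beta> + tens (sA \<alpha>) \<gamma>"
    and "\<Delta> \<beta> = tens (\<alpha> * \<gamma> + \<beta> * \<alpha>) (\<alpha> - sA \<alpha>) + tens \<beta> \<beta> + tens \<gamma> \<gamma>"
    and "\<Delta> \<gamma> = tens (\<beta> * \<alpha> + \<alpha> * \<gamma>) (sA \<alpha> - \<alpha>) + tens \<gamma> \<beta> + tens \<beta> \<gamma>"
  shows "let X = \<alpha> + sA \<alpha>; Y = \<beta> + \<gamma> in
           sA X = X \<and> sA Y = Y \<and> X * Y + Y * X = 0 \<and> X^2 + Y^2 = 1 \<and>
           \<Delta> X = tens 1 X + tens X Y \<and> \<Delta> Y = tens Y Y"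
proof -
  have X_self_adj: "sA (\<alpha> + sA \<alpha>) = \<alpha> + sA \<alpha>"
    using involution_sum_self_adjoint[OF assms(1)] .
  have Y_self_adj: "sA (\<beta> + \<gamma>) = \<beta> + \<gamma>"
    using assms(1,5) unfolding involution_def qmap_relations_def by simp
  show ?thesis
    unfolding Let_def
    using X_self_adj Y_self_adj qmap_anticommute[OF assms(5)]
      qmap_square_sum[OF assms(1,5)] coproduct_X[OF assms(1-6)]
      coproduct_Y[OF assms(3,4,7,8)]
    by blast
qed

end
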